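(* Let $G$ be a group, $\mathcal F$ a family of subgroups and $H\le G$. Let $L,P$ be finitely generated $\mathbb ZG$-modules with $P\subseteq L$, and $M,Q$ finitely generated $\mathbb ZH$-modules with $Q\subseteq M$, such that, as $\mathbb ZH$-modules, $M\subseteq L$ and $Q\subseteq P$, with all these inclusions compatible (the square $Q\hookrightarrow M\hookrightarrow L$, $Q\hookrightarrow P\hookrightarrow L$ commutes). Let $\|\cdot\|_L,\|\cdot\|_M$ be filling norms on $L$ and $M$, and suppose there is an integer $C_0\ge1$ with $\|x\|_L\le C_0\|x\|_M$ for all $x\in M$. Suppose $P$ is $\mathcal F$-free and there is a $\mathbb ZH$-homomorphism $\rho:P\to Q$ with $\rho\circ\imath=\mathrm{Id}_Q$, where $\imath:Q\to P$ is the inclusion. Then $\mathrm{Dist}^M_Q\preceq\mathrm{Dist}^L_P$.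
   Context: Filling norms: for a free $\mathbb ZG$-module with basis $B$, $\|\cdot\|_1$ is the $\ell_1$-norm for the $\mathbb Z$-basis $\{gb\}$; for a finitely generated $\mathbb ZG$-module $N$ and surjection $\eta:F\to N$ from a finitely generated based free module, $\|n\|_\eta=\min\{\|x\|_1:\eta(x)=n\}$. The distortion of a finitely generated submodule $P$ of a finitely generated $\mathbb ZG$-module $L$ is $\mathrm{Dist}^L_P(k)=\max\{\|\gamma\|_P:\gamma\in P,\|\gamma\|_L\le k\}$ (possibly $\infty$) for chosen filling norms $\|\cdot\|_P,\|\cdot\|_L$; similarly over $\mathbb ZH$. A $\mathbb ZG$-module is $\mathcal F$-free if it is isomorphic to $\mathbb Z[S]$ for a $G$-set $S$ all of whose isotropy groups lie in $\mathcal F$. $f\preceq g$ means $\exists C>0$: $f(n)\le Cg(Cn+C)+Cn+C$ for all $n$. *)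

theory Defs
  imports "HOL-Algebra.Group" "HOL-Library.Extended_Nat"
begin

definition zmul :: "int \<Rightarrow> 'm::ab_group_add \<Rightarrow> 'm" where
  "zmul k x = (if 0 \<le> k then (\<Sum>i<nat k. x) else - (\<Sum>i<nat (- k). x))"

definition is_ZG_action :: "('g, 'b) monoid_scheme \<Rightarrow> ('g \<Rightarrow> 'm::ab_group_add \<Rightarrow> 'm) \<Rightarrow> bool" where
  "is_ZG_action G act \<longleftrightarrow>
     (\<forall>g\<in>carrier G. \<forall>x y. act g (x + y) = act g x + act g y) \<and>
     (\<forall>x. act \<one>\<^bsub>G\<^esub> x = x) \<and>
     (\<forall>g\<in>carrier G. \<forall>h\<in>carrier G. \<forall>x. act (g \<otimes>\<^bsub>G\<^esub> h) x = act g (act h x))"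

inductive_set gen_sub :: "'g set \<Rightarrow> ('g \<Rightarrow> 'm::ab_group_add \<Rightarrow> 'm) \<Rightarrow> 'm set \<Rightarrow> 'm set"
  for K act S where
  gen_base: "x \<in> S \<Longrightarrow> x \<in> gen_sub K act S"
| gen_zero: "0 \<in> gen_sub K act S"
| gen_add: "x \<in> gen_sub K act S \<Longrightarrow> y \<in> gen_sub K act S \<Longrightarrow> x + y \<in> gen_sub K act S"
| gen_neg: "x \<in> gen_sub K act S \<Longrightarrow> - x \<in> gen_sub K act S"
| gen_act: "g \<in> K \<Longrightarrow> x \<in> gen_sub K act S \<Longrightarrow> act g x \<in> gen_sub K act S"

definition fg_module :: "'g set \<Rightarrow> ('g \<Rightarrow> 'm::ab_group_add \<Rightarrow> 'm) \<Rightarrow> 'm set \<Rightarrow> bool" where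
  "fg_module K act N \<longleftrightarrow> (\<exists>S. finite S \<and> N = gen_sub K act S)"

text \<open>A surjection eta from the based free ZK-module F = ZK^m (basis b_0..b_(m-1)) onto N
  is determined by the list ss of images ss!i = eta(b_i); it is surjective iff the
  entries of ss generate N.\<close>
definition filling_gens :: "'g set \<Rightarrow> ('g \<Rightarrow> 'm::ab_group_add \<Rightarrow> 'm) \<Rightarrow> 'm set \<Rightarrow> 'm list \<Rightarrow> bool" where
  "filling_gens K act N ss \<longleftrightarrow> N = gen_sub K act (set ss)"

text \<open>Elements of F = ZK^m: finitely supported coefficient functions a g i
  (coefficient of the Z-basis element g b_i, g in K, i < m).\<close>
definition coeff_supp :: "('g \<Rightarrow> nat \<Rightarrow> int) \<Rightarrow> ('g \<times> nat) set" where
  "coeff_supp a = {(g, i). a g i \<noteq> 0}"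

definition free_elem :: "'g set \<Rightarrow> nat \<Rightarrow> ('g \<Rightarrow> nat \<Rightarrow> int) \<Rightarrow> bool" where
  "free_elem K m a \<longleftrightarrow> finite (coeff_supp a) \<and> coeff_supp a \<subseteq> K \<times> {..<m}"

definition l1_norm :: "('g \<Rightarrow> nat \<Rightarrow> int) \<Rightarrow> nat" where
  "l1_norm a = (\<Sum>(g, i)\<in>coeff_supp a. nat \<bar>a g i\<bar>)"

definition eta_map :: "('g \<Rightarrow> 'm::ab_group_add \<Rightarrow> 'm) \<Rightarrow> 'm list \<Rightarrow> ('g \<Rightarrow> nat \<Rightarrow> int) \<Rightarrow> 'm" where
  "eta_map act ss a = (\<Sum>(g, i)\<in>coeff_supp a. zmul (a g i) (act g (ss ! i)))"

definition fnorm :: "'g set \<Rightarrow> ('g \<Rightarrow> 'm::ab_group_add \<Rightarrow> 'm) \<Rightarrow> 'm list \<Rightarrow> 'm \<Rightarrow> nat" where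
  "fnorm K act ss n =
     (LEAST k. \<exists>a. free_elem K (length ss) a \<and> eta_map act ss a = n \<and> l1_norm a = k)"

definition Dist :: "'g set \<Rightarrow> ('g \<Rightarrow> 'm::ab_group_add \<Rightarrow> 'm) \<Rightarrow> 'm list \<Rightarrow> 'm set \<Rightarrow> 'm list \<Rightarrow> nat \<Rightarrow> enat" where
  "Dist K act sN Sub sSub k =
     (SUP \<gamma>\<in>{\<gamma>. \<gamma> \<in> Sub \<and> fnorm K act sN \<gamma> \<le> k}. enat (fnorm K act sSub \<gamma>))"

definition dom_le :: "(nat \<Rightarrow> enat) \<Rightarrow> (nat \<Rightarrow> enat) \<Rightarrow> bool" where
  "dom_le f g \<longleftrightarrow> (\<exists>C::nat. C > 0 \<and>
     (\<forall>n. f n \<le> enat C * g (C * n + C) + enat (C * n + C)))"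

definition z_indep :: "'m::ab_group_add set \<Rightarrow> bool" where
  "z_indep B \<longleftrightarrow> (\<forall>T c. finite T \<longrightarrow> T \<subseteq> B \<longrightarrow> (\<Sum>b\<in>T. zmul (c b) b) = 0 \<longrightarrow> (\<forall>b\<in>T. c b = 0))"

definition z_span :: "'m::ab_group_add set \<Rightarrow> 'm set" where
  "z_span B = {x. \<exists>T c. finite T \<and> T \<subseteq> B \<and> x = (\<Sum>b\<in>T. zmul (c b) b)}"

text \<open>P is F-free: P is isomorphic to Z[S] for a G-set S with all isotropy groups in F,
  i.e. P has a G-invariant Z-basis B all of whose stabilisers lie in F.\<close>
definition F_free :: "('g, 'b) monoid_scheme \<Rightarrow> ('g \<Rightarrow> 'm::ab_group_add \<Rightarrow> 'm) \<Rightarrow> 'g set set \<Rightarrow> 'm set \<Rightarrow> bool" where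
  "F_free G act \<F> P \<longleftrightarrow> (\<exists>B. B \<subseteq> P \<and> z_indep B \<and> z_span B = P \<and>
       (\<forall>g\<in>carrier G. \<forall>b\<in>B. act g b \<in> B) \<and>
       (\<forall>b\<in>B. {g\<in>carrier G. act g b = b} \<in> \<F>))"

end

theory Submission
  imports Defs
begin

text \<open>
  Write \<open>\<gamma> \<in> Q\<close> as a word of length \<open>\<parallel>\<gamma>\<parallel>\<^sub>P\<close> in the \<open>G\<close>-translates of the generators of \<open>P\<close>.
  Each such translate is a sum of at most \<open>D\<close> elements of the \<open>G\<close>-invariant \<open>\<int>\<close>-basis \<open>B\<close> of
  \<open>P\<close> (and their negatives), so \<open>\<gamma>\<close> is a \<open>B\<close>-word of length at most \<open>D \<parallel>\<gamma>\<parallel>\<^sub>P\<close>. On the other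
  hand \<open>\<gamma>\<close> lies in the span of the \<open>H\<close>-orbit \<open>Y\<close> of the finitely many basis elements needed to
  express the generators of \<open>Q\<close>; by independence the letters of the \<open>B\<close>-word outside \<open>Y\<close>
  cancel. Applying the retraction \<open>\<rho>\<close>, which fixes \<open>\<gamma>\<close>, replaces every remaining letter
  \<open>h f\<close> by \<open>h \<rho>(f)\<close>, whose \<open>Q\<close>-norm is bounded by a constant \<open>R\<close>. Hence
  \<open>\<parallel>\<gamma>\<parallel>\<^sub>Q \<le> R D \<parallel>\<gamma>\<parallel>\<^sub>P\<close>, and together with \<open>\<parallel>\<gamma>\<parallel>\<^sub>L \<le> C\<^sub>0 \<parallel>\<gamma>\<parallel>\<^sub>M\<close> this bounds
  \<open>Dist\<^sup>M\<^sub>Q\<close> by a multiple of \<open>Dist\<^sup>L\<^sub>P\<close>.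
\<close>

lemma zmul_0 [simp]: "zmul 0 y = 0"
  by (simp add: zmul_def)

lemma zmul_1 [simp]: "zmul 1 y = y"
  by (simp add: zmul_def)

lemma zmul_minus_1 [simp]: "zmul (- 1) y = - y"
  by (simp add: zmul_def)

lemma zmul_succ: "zmul (k + 1) y = zmul k y + y"
proof (cases "0 \<le> k")
  case True
  then have "nat (k + 1) = Suc (nat k)" by simp
  with True show ?thesis by (simp add: zmul_def)
next
  case False
  then obtain m where m: "nat (- k) = Suc m"
    by (metis gr0_implies_Suc zero_less_nat_eq neg_0_less_iff_less not_le)
  then have "nat (- (k + 1)) = m" by simp
  with m False show ?thesis by (cases "0 \<le> k + 1") (auto simp: zmul_def)
qed

lemma zmul_add: "zmul (k + l) y = zmul k y + zmul l y"
proof (induction l rule: int_induct[where k = 0])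
  case (step1 i)
  then show ?case using zmul_succ[of "k + i" y] zmul_succ[of i y] by (simp add: add.assoc)
next
  case (step2 i)
  then show ?case using zmul_succ[of "k + (i - 1)" y] zmul_succ[of "i - 1" y] by simp
qed simp

section \<open>Words in a set of generators\<close>

definition signed_sum :: "(bool \<times> 'm::ab_group_add) list \<Rightarrow> 'm" where
  "signed_sum l = sum_list (map (\<lambda>(s, y). if s then y else - y) l)"

lemma signed_sum_Nil [simp]: "signed_sum [] = 0"
  by (simp add: signed_sum_def)

lemma signed_sum_Cons [simp]: "signed_sum ((s, y) # l) = (if s then y else - y) + signed_sum l"
  by (simp add: signed_sum_def)

lemma signed_sum_append [simp]: "signed_sum (l1 @ l2) = signed_sum l1 + signed_sum l2"
  by (simp add: signed_sum_def)

lemma signed_sum_map_Not: "signed_sum (map (apfst Not) l) = - signed_sum l"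
  by (induction l) auto

lemma signed_sum_filter:
  "signed_sum l = signed_sum (filter P l) + signed_sum (filter (\<lambda>p. \<not> P p) l)"
  by (induction l) (auto simp: algebra_simps)

definition word_le :: "'m::ab_group_add set \<Rightarrow> 'm \<Rightarrow> nat \<Rightarrow> bool" where
  "word_le Z x n \<longleftrightarrow> (\<exists>l. x = signed_sum l \<and> snd ` set l \<subseteq> Z \<and> length l \<le> n)"

lemma word_le_signed_sum: "snd ` set l \<subseteq> Z \<Longrightarrow> word_le Z (signed_sum l) (length l)"
  unfolding word_le_def by blast

lemma word_le_0 [simp]: "word_le Z 0 n"
  unfolding word_le_def by (rule exI[of _ "[]"]) simp

lemma word_le_mono: "word_le Z x n \<Longrightarrow> n \<le> m \<Longrightarrow> Z \<subseteq> Z' \<Longrightarrow> word_le Z' x m"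
  unfolding word_le_def by fastforce

lemma word_le_add: "word_le Z x n \<Longrightarrow> word_le Z y m \<Longrightarrow> word_le Z (x + y) (n + m)"
  unfolding word_le_def
proof (elim exE conjE)
  fix l1 l2 assume "x = signed_sum l1" "snd ` set l1 \<subseteq> Z" "length l1 \<le> n"
    and "y = signed_sum l2" "snd ` set l2 \<subseteq> Z" "length l2 \<le> m"
  then show "\<exists>l. x + y = signed_sum l \<and> snd ` set l \<subseteq> Z \<and> length l \<le> n + m"
    by (intro exI[of _ "l1 @ l2"]) auto
qed

lemma word_le_uminus: "word_le Z x n \<Longrightarrow> word_le Z (- x) n"
  unfolding word_le_def
proof (elim exE conjE)
  fix l assume "x = signed_sum l" "snd ` set l \<subseteq> Z" "length l \<le> n"
  then show "\<exists>l. - x = signed_sum l \<and> snd ` set l \<subseteq> Z \<and> length l \<le> n"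
    by (intro exI[of _ "map (apfst Not) l"]) (simp add: signed_sum_map_Not image_image)
qed

lemma word_le_generator: "y \<in> Z \<Longrightarrow> word_le Z y 1"
  using word_le_signed_sum[of "[(True, y)]" Z] by simp

lemma word_le_zmul: "y \<in> Z \<Longrightarrow> word_le Z (zmul k y) (nat \<bar>k\<bar>)"
proof (induction k rule: int_induct[where k = 0])
  case (step1 i)
  then have "word_le Z (zmul i y + y) (nat \<bar>i\<bar> + 1)"
    by (intro word_le_add word_le_generator)
  with step1 show ?case by (simp add: zmul_succ nat_add_distrib)
next
  case (step2 i)
  then have "word_le Z (zmul i y + - y) (nat \<bar>i\<bar> + 1)"
    by (intro word_le_add word_le_uminus word_le_generator)
  moreover have "zmul (i - 1) y = zmul i y + - y"
    using zmul_succ[of "i - 1" y] by simp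
  moreover have "nat \<bar>i - 1\<bar> = nat \<bar>i\<bar> + 1"
    using step2(1) by simp
  ultimately show ?case by (simp only:)
qed simp

lemma word_le_sum:
  "finite S \<Longrightarrow> (\<And>j. j \<in> S \<Longrightarrow> word_le Z (f j) (w j)) \<Longrightarrow> word_le Z (\<Sum>j\<in>S. f j) (\<Sum>j\<in>S. w j)"
  by (induction S rule: finite_induct) (auto intro: word_le_add)

lemma word_le_of_z_span:
  assumes "x \<in> z_span B"
  shows "\<exists>n. word_le B x n"
proof -
  obtain T c where "finite T" "T \<subseteq> B" "x = (\<Sum>b\<in>T. zmul (c b) b)"
    using assms unfolding z_span_def by blast
  then have "word_le B x (\<Sum>b\<in>T. nat \<bar>c b\<bar>)"
    by (auto intro: word_le_sum word_le_zmul)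
  then show ?thesis ..
qed

lemma word_le_subst:
  assumes "word_le Z x n" and "\<And>z. z \<in> Z \<Longrightarrow> word_le W z D"
  shows "word_le W x (D * n)"
proof -
  obtain l where l: "x = signed_sum l" "snd ` set l \<subseteq> Z" "length l \<le> n"
    using assms(1) unfolding word_le_def by blast
  have "word_le W (signed_sum l) (D * length l)" using l(2)
  proof (induction l)
    case (Cons p l)
    obtain s y where p: "p = (s, y)" by force
    with Cons.prems have "word_le W (if s then y else - y) D"
      using assms(2) word_le_uminus by auto
    moreover have "word_le W (signed_sum l) (D * length l)"
      using Cons by simp
    ultimately have "word_le W ((if s then y else - y) + signed_sum l) (D + D * length l)"
      by (rule word_le_add)
    then show ?case by (simp add: p)
  qed simp
  moreover have "D * length l \<le> D * n"
    using l(3) by simp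
  ultimately show ?thesis
    using l(1) word_le_mono by blast
qed

definition additive_subgroup :: "'m::ab_group_add set \<Rightarrow> bool" where
  "additive_subgroup P \<longleftrightarrow> 0 \<in> P \<and> (\<forall>x\<in>P. - x \<in> P) \<and> (\<forall>x\<in>P. \<forall>y\<in>P. x + y \<in> P)"

definition additive_on :: "'m::ab_group_add set \<Rightarrow> ('m \<Rightarrow> 'n::ab_group_add) \<Rightarrow> bool" where
  "additive_on P f \<longleftrightarrow> (\<forall>x\<in>P. \<forall>y\<in>P. f (x + y) = f x + f y)"

lemma signed_sum_mem:
  "additive_subgroup P \<Longrightarrow> snd ` set l \<subseteq> P \<Longrightarrow> signed_sum l \<in> P"
  by (induction l) (auto simp: additive_subgroup_def)

lemma additive_on_zero:
  assumes "additive_subgroup P" "additive_on P f"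
  shows "f 0 = 0"
proof -
  have "f (0 + 0) = f 0 + f 0"
    using assms unfolding additive_subgroup_def additive_on_def by blast
  then show ?thesis
    by (simp only: add.right_neutral add_cancel_right_right)
qed

lemma additive_on_uminus:
  assumes "additive_subgroup P" "additive_on P f" "x \<in> P"
  shows "f (- x) = - f x"
proof -
  have "f 0 = 0"
    using assms(1,2) by (rule additive_on_zero)
  moreover have "f (x + - x) = f x + f (- x)"
    using assms unfolding additive_subgroup_def additive_on_def by blast
  ultimately show ?thesis
    using minus_unique[of "f x" "f (- x)"] by simp
qed

lemma additive_on_signed_sum:
  assumes "additive_subgroup P" "additive_on P f" "snd ` set l \<subseteq> P"
  shows "f (signed_sum l) = signed_sum (map (apsnd f) l)"
  using assms(3)
proof (induction l)
  case Nil
  then show ?case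
    using additive_on_zero[OF assms(1,2)] by simp
next
  case (Cons p l)
  obtain s y where p: "p = (s, y)" by force
  with Cons.prems have y: "y \<in> P" and l: "snd ` set l \<subseteq> P" by auto
  have "signed_sum l \<in> P" "- y \<in> P"
    using signed_sum_mem[OF assms(1) l] y assms(1) by (auto simp: additive_subgroup_def)
  then have "f ((if s then y else - y) + signed_sum l) = f (if s then y else - y) + f (signed_sum l)"
    using assms(2) y unfolding additive_on_def by simp
  also have "f (if s then y else - y) = (if s then f y else - f y)"
    using additive_on_uminus[OF assms(1,2) y] by simp
  finally show ?case
    using Cons.IH l by (simp add: p)
qed

lemma word_le_image:
  assumes "additive_subgroup P" "additive_on P f" "Z \<subseteq> P" "word_le Z x n"
  shows "word_le (f ` Z) (f x) n"
proof -
  obtain l where l: "x = signed_sum l" "snd ` set l \<subseteq> Z" "length l \<le> n"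
    using assms(4) unfolding word_le_def by blast
  have "snd ` set l \<subseteq> P"
    using l(2) assms(3) by (rule order_trans)
  then have "f x = signed_sum (map (apsnd f) l)"
    using additive_on_signed_sum[OF assms(1,2)] l(1) by simp
  moreover have "snd ` set (map (apsnd f) l) \<subseteq> f ` Z"
    using l(2) by (auto simp: image_image)
  ultimately show ?thesis
    using l(3) unfolding word_le_def by (intro exI[of _ "map (apsnd f) l"]) simp
qed

lemma word_le_act:
  assumes "is_ZG_action G act" "g \<in> carrier G" "word_le Z x n" "act g ` Z \<subseteq> Z'"
  shows "word_le Z' (act g x) n"
proof -
  have "additive_on UNIV (act g)"
    using assms(1,2) by (simp add: additive_on_def is_ZG_action_def)
  then have "word_le (act g ` Z) (act g x) n"
    using assms(3) by (intro word_le_image) (auto simp: additive_subgroup_def)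
  with assms(4) show ?thesis
    using word_le_mono by blast
qed

lemma act_mult:
  "is_ZG_action G act \<Longrightarrow> g \<in> carrier G \<Longrightarrow> h \<in> carrier G \<Longrightarrow>
    act (g \<otimes>\<^bsub>G\<^esub> h) x = act g (act h x)"
  by (simp add: is_ZG_action_def)

definition orbit_set :: "'g set \<Rightarrow> ('g \<Rightarrow> 'm \<Rightarrow> 'm) \<Rightarrow> 'm set \<Rightarrow> 'm set" where
  "orbit_set K act S = {act g s |g s. g \<in> K \<and> s \<in> S}"

lemma subset_orbit_set:
  assumes "subgroup K G" "is_ZG_action G act"
  shows "S \<subseteq> orbit_set K act S"
proof
  fix s assume "s \<in> S"
  moreover have "\<one>\<^bsub>G\<^esub> \<in> K"
    using assms(1) by (rule subgroup.one_closed)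
  moreover have "act \<one>\<^bsub>G\<^esub> s = s"
    using assms(2) by (simp add: is_ZG_action_def)
  ultimately show "s \<in> orbit_set K act S"
    unfolding orbit_set_def by (metis (mono_tags, lifting) mem_Collect_eq)
qed

lemma act_orbit_set:
  assumes "subgroup K G" "is_ZG_action G act" "g \<in> K"
  shows "act g ` orbit_set K act S \<subseteq> orbit_set K act S"
proof
  fix y assume "y \<in> act g ` orbit_set K act S"
  then obtain h s where "h \<in> K" "s \<in> S" "y = act g (act h s)"
    unfolding orbit_set_def by blast
  moreover have "g \<otimes>\<^bsub>G\<^esub> h \<in> K"
    using assms(1,3) calculation(1) by (rule subgroup.m_closed)
  moreover have "g \<in> carrier G" "h \<in> carrier G"
    using assms(3) calculation(1) subgroup.subset[OF assms(1)] by auto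
  then have "act g (act h s) = act (g \<otimes>\<^bsub>G\<^esub> h) s"
    using act_mult[OF assms(2)] by simp
  ultimately show "y \<in> orbit_set K act S"
    unfolding orbit_set_def by blast
qed

lemma word_le_of_gen_sub:
  assumes "is_ZG_action G act" "K \<subseteq> carrier G" "\<And>g. g \<in> K \<Longrightarrow> act g ` Z \<subseteq> Z"
    and "\<And>s. s \<in> S \<Longrightarrow> \<exists>n. word_le Z s n" and "x \<in> gen_sub K act S"
  shows "\<exists>n. word_le Z x n"
  using assms(5)
proof (induction rule: gen_sub.induct)
  case (gen_add x y)
  then show ?case using word_le_add by blast
next
  case (gen_neg x)
  then show ?case using word_le_uminus by blast
next
  case (gen_act g x)
  then show ?case using word_le_act[OF assms(1)] assms(2,3) by blast
qed (use assms(4) in auto)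

lemma word_le_orbit_set_gen_sub:
  assumes "subgroup K G" "is_ZG_action G act" "x \<in> gen_sub K act S"
  shows "\<exists>n. word_le (orbit_set K act S) x n"
proof (rule word_le_of_gen_sub[OF assms(2) subgroup.subset[OF assms(1)] act_orbit_set[OF assms(1,2)]])
  show "\<exists>n. word_le (orbit_set K act S) s n" if "s \<in> S" for s
    using that subset_orbit_set[OF assms(1,2)] word_le_generator by blast
qed (use assms(3) in simp_all)

lemma uniform_word_bound_orbit:
  assumes "is_ZG_action G act" "K \<subseteq> carrier G" "\<And>g. g \<in> K \<Longrightarrow> act g ` Z \<subseteq> Z"
    and "finite F" "\<And>f. f \<in> F \<Longrightarrow> \<exists>n. word_le Z f n"
  shows "\<exists>D. \<forall>y\<in>orbit_set K act F. word_le Z y D"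
proof -
  have "\<forall>f\<in>F. \<exists>n. word_le Z f n"
    using assms(5) by blast
  then obtain w where w: "\<forall>f\<in>F. word_le Z f (w f)"
    by (blast dest: bchoice)
  have "word_le Z y (\<Sum>f\<in>F. w f)" if y: "y \<in> orbit_set K act F" for y
  proof -
    obtain g f where g: "g \<in> K" and f: "f \<in> F" and y_eq: "y = act g f"
      using y unfolding orbit_set_def by blast
    have "word_le Z (act g f) (w f)"
      using word_le_act[OF assms(1) _ _ assms(3)[OF g]] g assms(2) w f by blast
    moreover have "w f \<le> (\<Sum>f\<in>F. w f)"
      using assms(4) f by (intro member_le_sum) auto
    ultimately show ?thesis
      unfolding y_eq using word_le_mono by blast
  qed
  then show ?thesis by blast
qed

section \<open>Filling norms are word lengths\<close>

lemma eta_map_eq_sum: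
  assumes "finite S" "coeff_supp a \<subseteq> S"
  shows "eta_map act ss a = (\<Sum>(g, i)\<in>S. zmul (a g i) (act g (ss ! i)))"
  unfolding eta_map_def
  by (rule sum.mono_neutral_left) (use assms in \<open>auto simp: coeff_supp_def\<close>)

lemma l1_norm_eq_sum:
  assumes "finite S" "coeff_supp a \<subseteq> S"
  shows "l1_norm a = (\<Sum>(g, i)\<in>S. nat \<bar>a g i\<bar>)"
  unfolding l1_norm_def
  by (rule sum.mono_neutral_left) (use assms in \<open>auto simp: coeff_supp_def\<close>)

lemma coeff_supp_add: "coeff_supp (\<lambda>g i. a g i + b g i) \<subseteq> coeff_supp a \<union> coeff_supp b"
  by (auto simp: coeff_supp_def)

lemma free_elem_add:
  "free_elem K m a \<Longrightarrow> free_elem K m b \<Longrightarrow> free_elem K m (\<lambda>g i. a g i + b g i)"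
  unfolding free_elem_def using coeff_supp_add[of a b]
  by (meson finite_UnI le_sup_iff order_trans rev_finite_subset)

lemma eta_map_add:
  assumes "free_elem K m a" "free_elem K m b"
  shows "eta_map act ss (\<lambda>g i. a g i + b g i) = eta_map act ss a + eta_map act ss b"
proof -
  let ?S = "coeff_supp a \<union> coeff_supp b"
  have "finite ?S"
    using assms by (simp add: free_elem_def)
  then show ?thesis
    using coeff_supp_add[of a b]
    by (simp add: eta_map_eq_sum[of ?S] zmul_add sum.distrib case_prod_beta)
qed

lemma l1_norm_add_le:
  assumes "free_elem K m a" "free_elem K m b"
  shows "l1_norm (\<lambda>g i. a g i + b g i) \<le> l1_norm a + l1_norm b"
proof -
  let ?S = "coeff_supp a \<union> coeff_supp b"
  have S: "finite ?S"
    using assms by (simp add: free_elem_def)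
  have "(\<Sum>(g, i)\<in>?S. nat \<bar>a g i + b g i\<bar>) \<le> (\<Sum>(g, i)\<in>?S. nat \<bar>a g i\<bar> + nat \<bar>b g i\<bar>)"
    by (intro sum_mono) auto
  with S coeff_supp_add[of a b] show ?thesis
    by (simp add: l1_norm_eq_sum[of ?S] sum.distrib case_prod_beta)
qed

lemma coeff_supp_single:
  "coeff_supp (\<lambda>h j. if h = g \<and> j = i then e else 0) = (if e = 0 then {} else {(g, i)})"
  by (auto simp: coeff_supp_def)

lemma free_elem_single:
  "g \<in> K \<Longrightarrow> i < m \<Longrightarrow> free_elem K m (\<lambda>h j. if h = g \<and> j = i then e else 0)"
  by (simp add: free_elem_def coeff_supp_single)

lemma eta_map_single:
  "eta_map act ss (\<lambda>h j. if h = g \<and> j = i then e else 0) = zmul e (act g (ss ! i))"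
  by (simp add: eta_map_def coeff_supp_single)

lemma l1_norm_single: "l1_norm (\<lambda>h j. if h = g \<and> j = i then e else 0) = nat \<bar>e\<bar>"
  by (simp add: l1_norm_def coeff_supp_single)

lemma free_elem_of_signed_sum:
  assumes "snd ` set l \<subseteq> orbit_set K act (set ss)"
  shows "\<exists>a. free_elem K (length ss) a \<and> eta_map act ss a = signed_sum l \<and> l1_norm a \<le> length l"
  using assms
proof (induction l)
  case Nil
  show ?case
    by (intro exI[of _ "\<lambda>_ _. 0"]) (simp add: free_elem_def eta_map_def l1_norm_def coeff_supp_def)
next
  case (Cons p l)
  obtain s y where p: "p = (s, y)" by force
  obtain a where a: "free_elem K (length ss) a" "eta_map act ss a = signed_sum l" "l1_norm a \<le> length l"
    using Cons by auto
  obtain g i where g: "g \<in> K" and i: "i < length ss" and y: "y = act g (ss ! i)"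
    using Cons.prems p unfolding orbit_set_def by (auto simp: in_set_conv_nth)
  define e :: int where "e = (if s then 1 else - 1)"
  define d where "d = (\<lambda>h j. if h = g \<and> j = i then e else 0)"
  have d: "free_elem K (length ss) d"
    unfolding d_def using g i by (rule free_elem_single)
  have "eta_map act ss d = (if s then y else - y)"
    by (simp add: d_def eta_map_single e_def y)
  then have "eta_map act ss (\<lambda>h j. d h j + a h j) = (if s then y else - y) + signed_sum l"
    using eta_map_add[OF d a(1), of act ss] a(2) by simp
  moreover have "l1_norm d = 1"
    by (simp add: d_def l1_norm_single e_def)
  then have "l1_norm (\<lambda>h j. d h j + a h j) \<le> Suc (length l)"
    using l1_norm_add_le[OF d a(1)] a(3) by simp
  ultimately show ?case
    using free_elem_add[OF d a(1)] p by auto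
qed

lemma free_elem_of_word_le:
  assumes "word_le (orbit_set K act (set ss)) x n"
  shows "\<exists>a. free_elem K (length ss) a \<and> eta_map act ss a = x \<and> l1_norm a \<le> n"
  using assms free_elem_of_signed_sum unfolding word_le_def by (meson order_trans)

lemma word_le_eta_map:
  assumes "free_elem K (length ss) a"
  shows "word_le (orbit_set K act (set ss)) (eta_map act ss a) (l1_norm a)"
  unfolding eta_map_def l1_norm_def
proof (intro word_le_sum)
  show "finite (coeff_supp a)"
    using assms by (simp add: free_elem_def)
next
  fix p assume "p \<in> coeff_supp a"
  then obtain g i where "p = (g, i)" "g \<in> K" "i < length ss"
    using assms unfolding free_elem_def by auto
  then have "act (fst p) (ss ! snd p) \<in> orbit_set K act (set ss)"
    unfolding orbit_set_def using nth_mem by fastforce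
  then show "word_le (orbit_set K act (set ss)) (case p of (g, i) \<Rightarrow> zmul (a g i) (act g (ss ! i)))
      (case p of (g, i) \<Rightarrow> nat \<bar>a g i\<bar>)"
    by (auto simp: case_prod_beta intro: word_le_zmul)
qed

text \<open>This holds even when \<open>x\<close> is not in the generated module: then both sides are the
  \<open>LEAST\<close> of the everywhere false predicate.\<close>

lemma fnorm_eq_Least_word_le:
  "fnorm K act ss x = (LEAST n. word_le (orbit_set K act (set ss)) x n)"
proof -
  let ?A = "\<lambda>k. \<exists>a. free_elem K (length ss) a \<and> eta_map act ss a = x \<and> l1_norm a = k"
  let ?W = "\<lambda>n. word_le (orbit_set K act (set ss)) x n"
  have AW: "?W k" if "?A k" for k
    using that word_le_eta_map by blast
  have WA: "\<exists>k\<le>n. ?A k" if "?W n" for n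
    using free_elem_of_word_le[OF that] by blast
  show ?thesis
  proof (cases "\<exists>n. ?W n")
    case True
    then have "?W (Least ?W)"
      by (rule LeastI_ex)
    then obtain k where "k \<le> Least ?W" "?A k"
      using WA by blast
    then have "Least ?A \<le> Least ?W"
      using Least_le[of ?A k] by simp
    moreover have "?A (Least ?A)"
      using \<open>?A k\<close> by (rule LeastI)
    then have "Least ?W \<le> Least ?A"
      by (intro Least_le AW)
    ultimately show ?thesis
      unfolding fnorm_def by simp
  next
    case False
    then have "\<not> ?A k" "\<not> ?W k" for k
      using AW by blast+
    then have "?A = ?W"
      by (intro ext) blast
    then show ?thesis
      unfolding fnorm_def by (rule arg_cong)
  qed
qed

lemma fnorm_le: "word_le (orbit_set K act (set ss)) x n \<Longrightarrow> fnorm K act ss x \<le> n"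
  unfolding fnorm_eq_Least_word_le by (rule Least_le)

lemma word_le_fnorm:
  assumes "subgroup K G" "is_ZG_action G act" "x \<in> gen_sub K act (set ss)"
  shows "word_le (orbit_set K act (set ss)) x (fnorm K act ss x)"
  unfolding fnorm_eq_Least_word_le
  using word_le_orbit_set_gen_sub[OF assms] by (rule LeastI_ex)

section \<open>Words over part of a \<open>\<int>\<close>-basis\<close>

definition signed_count :: "(bool \<times> 'm) list \<Rightarrow> 'm \<Rightarrow> int" where
  "signed_count l b = sum_list (map (\<lambda>(s, y). if y = b then (if s then 1 else - 1) else 0) l)"

lemma signed_count_Nil [simp]: "signed_count [] b = 0"
  by (simp add: signed_count_def)

lemma signed_count_Cons [simp]:
  "signed_count ((s, y) # l) b = (if y = b then (if s then 1 else - 1) else 0) + signed_count l b"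
  by (simp add: signed_count_def)

lemma signed_count_append [simp]: "signed_count (l1 @ l2) b = signed_count l1 b + signed_count l2 b"
  by (simp add: signed_count_def)

lemma signed_count_eq_0: "b \<notin> snd ` set l \<Longrightarrow> signed_count l b = 0"
  by (induction l) auto

lemma signed_sum_eq_sum_count:
  assumes "finite S" "snd ` set l \<subseteq> S"
  shows "signed_sum l = (\<Sum>b\<in>S. zmul (signed_count l b) b)"
  using assms(2)
proof (induction l)
  case (Cons p l)
  obtain s y where p: "p = (s, y)" by force
  with Cons.prems have "y \<in> S" "snd ` set l \<subseteq> S" by auto
  moreover have "(\<Sum>b\<in>S. zmul (if y = b then e else 0) b) = (if y \<in> S then zmul e y else 0)" for e
  proof -
    have "zmul (if y = b then e else 0) b = (if y = b then zmul e y else 0)" for b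
      by simp
    then show ?thesis
      using assms(1) by (simp add: sum.delta)
  qed
  ultimately show ?case
    using Cons.IH by (simp add: p zmul_add sum.distrib)
qed simp

lemma z_indep_signed_sum_disjoint:
  assumes "z_indep B" "snd ` set l1 \<subseteq> B" "snd ` set l2 \<subseteq> B"
    and "snd ` set l1 \<inter> snd ` set l2 = {}" and "signed_sum l1 = signed_sum l2"
  shows "signed_sum l1 = 0"
proof -
  define L where "L = l1 @ map (apfst Not) l2"
  have supp: "snd ` set L = snd ` set l1 \<union> snd ` set l2"
    by (simp add: L_def image_Un image_image)
  have "signed_sum L = 0"
    using assms(5) by (simp add: L_def signed_sum_map_Not)
  then have "(\<Sum>b\<in>snd ` set L. zmul (signed_count L b) b) = 0"
    using signed_sum_eq_sum_count[of "snd ` set L" L] by simp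
  moreover have "snd ` set L \<subseteq> B"
    using supp assms(2,3) by simp
  ultimately have "\<forall>b\<in>snd ` set L. signed_count L b = 0"
    using assms(1)[unfolded z_indep_def, rule_format, of "snd ` set L" "signed_count L"] by simp
  then have count: "signed_count L b = 0" if "b \<in> snd ` set l1" for b
    using that supp by simp
  have "signed_count l1 b = 0" if b: "b \<in> snd ` set l1" for b
  proof -
    have "b \<notin> snd ` set (map (apfst Not) l2)"
      using assms(4) b by (auto simp: image_image)
    then have "signed_count (map (apfst Not) l2) b = 0"
      by (rule signed_count_eq_0)
    then show ?thesis
      using count[OF b] by (simp add: L_def)
  qed
  then show ?thesis
    using signed_sum_eq_sum_count[of "snd ` set l1" l1] by simp
qed

text \<open>Independence of \<open>B\<close> forces the letters of a \<open>B\<close>-word for \<open>x\<close> that lie outside \<open>Y\<close>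
  to cancel.\<close>

lemma word_le_restrict_basis:
  assumes "z_indep B" "Y \<subseteq> B" "word_le B x n" "word_le Y x m"
  shows "word_le Y x n"
proof -
  obtain l where l: "x = signed_sum l" "snd ` set l \<subseteq> B" "length l \<le> n"
    using assms(3) unfolding word_le_def by blast
  obtain lY where lY: "x = signed_sum lY" "snd ` set lY \<subseteq> Y"
    using assms(4) unfolding word_le_def by blast
  define lin where "lin = filter (\<lambda>p. snd p \<in> Y) l"
  define lout where "lout = filter (\<lambda>p. snd p \<notin> Y) l"
  have x: "x = signed_sum lin + signed_sum lout"
    using l(1) signed_sum_filter unfolding lin_def lout_def by blast
  have "signed_sum lout = signed_sum (lY @ map (apfst Not) lin)"
    using x lY(1) by (simp add: signed_sum_map_Not algebra_simps)
  moreover have out: "snd ` set lout \<subseteq> B - Y"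
    using l(2) by (auto simp: lout_def)
  moreover have inner: "snd ` set (lY @ map (apfst Not) lin) \<subseteq> Y"
    using lY(2) by (auto simp: lin_def image_Un image_image)
  ultimately have "signed_sum lout = 0"
  proof (intro z_indep_signed_sum_disjoint[OF assms(1)])
    show "snd ` set lout \<subseteq> B" "snd ` set (lY @ map (apfst Not) lin) \<subseteq> B"
      using out inner assms(2) by auto
    show "snd ` set lout \<inter> snd ` set (lY @ map (apfst Not) lin) = {}"
      using out inner by auto
  qed
  then have "x = signed_sum lin"
    using x by simp
  moreover have "snd ` set lin \<subseteq> Y" "length lin \<le> n"
    using le_trans[OF length_filter_le l(3)] unfolding lin_def by auto
  ultimately show ?thesis
    unfolding word_le_def by blast
qed

section \<open>Comparison of filling norms through a retraction\<close>

lemma additive_subgroup_gen_sub: "additive_subgroup (gen_sub K act S)"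
  by (simp add: additive_subgroup_def gen_sub.intros)

lemma finite_word_support:
  assumes "finite S" "\<And>s. s \<in> S \<Longrightarrow> \<exists>n. word_le B s n"
  shows "\<exists>F. finite F \<and> F \<subseteq> B \<and> (\<forall>s\<in>S. \<exists>n. word_le F s n)"
proof -
  have "\<forall>s\<in>S. \<exists>l. s = signed_sum l \<and> snd ` set l \<subseteq> B"
    using assms(2) unfolding word_le_def by blast
  then obtain l where l: "\<forall>s\<in>S. s = signed_sum (l s) \<and> snd ` set (l s) \<subseteq> B"
    by (rule bchoice[THEN exE])
  define F where "F = (\<Union>s\<in>S. snd ` set (l s))"
  have "word_le F s (length (l s))" if "s \<in> S" for s
  proof -
    have "word_le (snd ` set (l s)) (signed_sum (l s)) (length (l s))"
      by (rule word_le_signed_sum) simp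
    moreover have "snd ` set (l s) \<subseteq> F"
      using that unfolding F_def by blast
    ultimately have "word_le F (signed_sum (l s)) (length (l s))"
      using word_le_mono by blast
    then show ?thesis
      using l that by simp
  qed
  moreover have "finite F"
    using assms(1) unfolding F_def by simp
  moreover have "F \<subseteq> B"
    using l unfolding F_def by blast
  ultimately show ?thesis
    by blast
qed

lemma word_le_retract:
  assumes "z_indep B" "Y \<subseteq> B" "B \<subseteq> P" "additive_subgroup P" "additive_on P \<rho>"
    and "word_le B x n" "word_le Y x m" "\<rho> x = x" "\<And>y. y \<in> Y \<Longrightarrow> word_le W (\<rho> y) R"
  shows "word_le W x (R * n)"
proof -
  have "word_le Y x n"
    using assms(1,2,6,7) by (rule word_le_restrict_basis)
  moreover have "Y \<subseteq> P"
    using assms(2,3) by (rule order_trans)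
  ultimately have "word_le (\<rho> ` Y) x n"
    using word_le_image[OF assms(4,5)] assms(8) by metis
  then show ?thesis
    by (rule word_le_subst) (use assms(9) in blast)
qed

lemma fnorm_le_mult_fnorm_of_retract:
  assumes G: "group G" and H: "subgroup H G" and act: "is_ZG_action G act"
    and P: "P = gen_sub (carrier G) act (set sP)" and Q: "Q = gen_sub H act (set sQ)"
    and "Q \<subseteq> P" and B: "B \<subseteq> P" "z_indep B" "z_span B = P" "\<forall>g\<in>carrier G. \<forall>b\<in>B. act g b \<in> B"
    and \<rho>: "additive_on P \<rho>" "\<forall>h\<in>H. \<forall>x\<in>P. \<rho> (act h x) = act h (\<rho> x)"
      "\<rho> ` P \<subseteq> Q" "\<forall>q\<in>Q. \<rho> q = q"
  shows "\<exists>c. \<forall>\<gamma>\<in>Q. fnorm H act sQ \<gamma> \<le> c * fnorm (carrier G) act sP \<gamma>"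
proof -
  have HG: "H \<subseteq> carrier G"
    using H by (rule subgroup.subset)
  have B_closed: "act g ` B \<subseteq> B" if "g \<in> carrier G" for g
    using B(4) that by blast
  have P_words: "\<exists>n. word_le B x n" if "x \<in> P" for x
    using that B(3) word_le_of_z_span by blast
  have "\<exists>n. word_le B s n" if "s \<in> set sP" for s
    using P_words[unfolded P, OF gen_sub.gen_base[OF that]] .
  then obtain D where D: "\<forall>y\<in>orbit_set (carrier G) act (set sP). word_le B y D"
    using uniform_word_bound_orbit[OF act order_refl B_closed finite_set] by blast
  have "\<exists>n. word_le B s n" if "s \<in> set sQ" for s
    using P_words gen_sub.gen_base[OF that] Q \<open>Q \<subseteq> P\<close> by blast
  with finite_word_support obtain F where F: "finite F" "F \<subseteq> B" "\<forall>s\<in>set sQ. \<exists>n. word_le F s n"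
    by (metis finite_set)
  define Y where "Y = orbit_set H act F"
  have Y_B: "Y \<subseteq> B"
    unfolding Y_def orbit_set_def using F(2) B(4) HG by blast
  have Q_words: "\<exists>m. word_le Y x m" if "x \<in> Q" for x
  proof (rule word_le_of_gen_sub[OF act HG])
    show "act h ` Y \<subseteq> Y" if "h \<in> H" for h
      unfolding Y_def using act_orbit_set[OF H act that] .
    show "\<exists>m. word_le Y s m" if s: "s \<in> set sQ" for s
    proof -
      obtain m where "word_le F s m"
        using F(3) s by blast
      then have "word_le Y s m"
        using word_le_mono[OF _ order_refl subset_orbit_set[OF H act]] unfolding Y_def by blast
      then show ?thesis ..
    qed
    show "x \<in> gen_sub H act (set sQ)"
      using that Q by simp
  qed
  have \<rho>_Y: "\<rho> ` Y \<subseteq> orbit_set H act (\<rho> ` F)"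
  proof
    fix z assume "z \<in> \<rho> ` Y"
    then obtain h f where hf: "h \<in> H" "f \<in> F" "z = \<rho> (act h f)"
      unfolding Y_def orbit_set_def by blast
    then have "z = act h (\<rho> f)"
      using \<rho>(2) F(2) B(1) by blast
    with hf show "z \<in> orbit_set H act (\<rho> ` F)"
      unfolding orbit_set_def by blast
  qed
  have "\<exists>n. word_le (orbit_set H act (set sQ)) z n" if "z \<in> \<rho> ` F" for z
  proof -
    have "z \<in> gen_sub H act (set sQ)"
      using that \<rho>(3) F(2) B(1) Q by blast
    then show ?thesis
      by (rule word_le_orbit_set_gen_sub[OF H act])
  qed
  then obtain R where R: "\<forall>z\<in>orbit_set H act (\<rho> ` F). word_le (orbit_set H act (set sQ)) z R"
    using uniform_word_bound_orbit[OF act HG act_orbit_set[OF H act] finite_imageI[OF F(1)]]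
    by blast
  have "fnorm H act sQ \<gamma> \<le> R * D * fnorm (carrier G) act sP \<gamma>" if \<gamma>: "\<gamma> \<in> Q" for \<gamma>
  proof -
    have "\<gamma> \<in> gen_sub (carrier G) act (set sP)"
      using \<gamma> \<open>Q \<subseteq> P\<close> P by blast
    then have "word_le (orbit_set (carrier G) act (set sP)) \<gamma> (fnorm (carrier G) act sP \<gamma>)"
      by (rule word_le_fnorm[OF group.subgroup_self[OF G] act])
    then have B_word: "word_le B \<gamma> (D * fnorm (carrier G) act sP \<gamma>)"
      by (rule word_le_subst) (use D in blast)
    obtain m where Y_word: "word_le Y \<gamma> m"
      using Q_words[OF \<gamma>] ..
    have P_subgroup: "additive_subgroup P"
      unfolding P by (rule additive_subgroup_gen_sub)
    have fixed: "\<rho> \<gamma> = \<gamma>"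
      using \<rho>(4) \<gamma> by blast
    have "word_le (orbit_set H act (set sQ)) (\<rho> y) R" if "y \<in> Y" for y
      using R \<rho>_Y that by blast
    then have "word_le (orbit_set H act (set sQ)) \<gamma> (R * (D * fnorm (carrier G) act sP \<gamma>))"
      by (rule word_le_retract[OF B(2) Y_B B(1) P_subgroup \<rho>(1) B_word Y_word fixed])
    then show ?thesis
      by (simp add: fnorm_le mult.assoc)
  qed
  then show ?thesis
    by blast
qed

lemma dom_le_Dist_of_fnorm_le:
  assumes "Q \<subseteq> P" and "\<forall>\<gamma>\<in>Q. fnorm K act sL \<gamma> \<le> C0 * fnorm K' act sM \<gamma>"
    and "\<forall>\<gamma>\<in>Q. fnorm K' act sQ \<gamma> \<le> c * fnorm K act sP \<gamma>"
  shows "dom_le (Dist K' act sM Q sQ) (Dist K act sL P sP)"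
  unfolding dom_le_def
proof (intro exI conjI allI)
  define C where "C = C0 + c + 1"
  show "0 < C"
    by (simp add: C_def)
  fix n
  let ?S = "{\<gamma>. \<gamma> \<in> P \<and> fnorm K act sL \<gamma> \<le> C * n + C}"
  show "Dist K' act sM Q sQ n \<le> enat C * Dist K act sL P sP (C * n + C) + enat (C * n + C)"
    unfolding Dist_def
  proof (rule SUP_least)
    fix \<gamma> assume "\<gamma> \<in> {\<gamma>. \<gamma> \<in> Q \<and> fnorm K' act sM \<gamma> \<le> n}"
    then have \<gamma>: "\<gamma> \<in> Q" "fnorm K' act sM \<gamma> \<le> n"
      by auto
    have "fnorm K act sL \<gamma> \<le> C0 * fnorm K' act sM \<gamma>"
      using assms(2) \<gamma>(1) by blast
    also have "\<dots> \<le> C0 * n"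
      using \<gamma>(2) by simp
    also have "\<dots> \<le> C * n + C"
      by (simp add: C_def add_mult_distrib)
    finally have "\<gamma> \<in> ?S"
      using \<gamma>(1) assms(1) by blast
    then have sup: "enat (fnorm K act sP \<gamma>) \<le> (SUP \<delta>\<in>?S. enat (fnorm K act sP \<delta>))"
      by (rule SUP_upper)
    have "fnorm K' act sQ \<gamma> \<le> c * fnorm K act sP \<gamma>"
      using assms(3) \<gamma>(1) by blast
    also have "\<dots> \<le> C * fnorm K act sP \<gamma>"
      unfolding C_def by (intro mult_le_mono1) simp
    finally have "enat (fnorm K' act sQ \<gamma>) \<le> enat C * enat (fnorm K act sP \<gamma>)"
      by simp
    also have "\<dots> \<le> enat C * (SUP \<delta>\<in>?S. enat (fnorm K act sP \<delta>))"
      using sup by (rule mult_left_mono) simp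
    also have "\<dots> \<le> enat C * (SUP \<delta>\<in>?S. enat (fnorm K act sP \<delta>)) + enat (C * n + C)"
      by simp
    finally show "enat (fnorm K' act sQ \<gamma>) \<le> enat C * (SUP \<delta>\<in>?S. enat (fnorm K act sP \<delta>)) + enat (C * n + C)" .
  qed
qed

theorem mainTheorem16:
  fixes G :: "('g, 'b) monoid_scheme"
    and \<F> :: "'g set set"
    and H :: "'g set"
    and act :: "'g \<Rightarrow> 'm::ab_group_add \<Rightarrow> 'm"
    and L P M Q :: "'m set"
    and sL sM :: "'m list"
    and C0 :: nat
    and \<rho> :: "'m \<Rightarrow> 'm"
  assumes "group G"
    and "\<forall>K\<in>\<F>. subgroup K G"
    and "subgroup H G"
    and "is_ZG_action G act"
    and "fg_module (carrier G) act L" and "fg_module (carrier G) act P" and "P \<subseteq> L"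
    and "fg_module H act M" and "fg_module H act Q" and "Q \<subseteq> M"
    and "M \<subseteq> L" and "Q \<subseteq> P"
    and "filling_gens (carrier G) act L sL"
    and "filling_gens H act M sM"
    and "C0 \<ge> 1"
    and "\<forall>x\<in>M. fnorm (carrier G) act sL x \<le> C0 * fnorm H act sM x"
    and "F_free G act \<F> P"
    and "\<forall>x\<in>P. \<forall>y\<in>P. \<rho> (x + y) = \<rho> x + \<rho> y"
    and "\<forall>h\<in>H. \<forall>x\<in>P. \<rho> (act h x) = act h (\<rho> x)"
    and "\<rho> ` P \<subseteq> Q"
    and "\<forall>q\<in>Q. \<rho> q = q"
  shows "\<forall>sP sQ. filling_gens (carrier G) act P sP \<longrightarrow> filling_gens H act Q sQ \<longrightarrow>
           dom_le (Dist H act sM Q sQ) (Dist (carrier G) act sL P sP)"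
proof (intro allI impI)
  fix sP sQ
  assume "filling_gens (carrier G) act P sP" "filling_gens H act Q sQ"
  then have P: "P = gen_sub (carrier G) act (set sP)" and Q: "Q = gen_sub H act (set sQ)"
    by (simp_all add: filling_gens_def)
  obtain B where B: "B \<subseteq> P" "z_indep B" "z_span B = P" "\<forall>g\<in>carrier G. \<forall>b\<in>B. act g b \<in> B"
    using \<open>F_free G act \<F> P\<close> unfolding F_free_def by blast
  have "additive_on P \<rho>"
    using assms(18) by (simp add: additive_on_def)
  from fnorm_le_mult_fnorm_of_retract[OF assms(1,3,4) P Q \<open>Q \<subseteq> P\<close> B this assms(19-21)]
  obtain c where "\<forall>\<gamma>\<in>Q. fnorm H act sQ \<gamma> \<le> c * fnorm (carrier G) act sP \<gamma>" ..
  moreover have "\<forall>\<gamma>\<in>Q. fnorm (carrier G) act sL \<gamma> \<le> C0 * fnorm H act sM \<gamma>"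
    using assms(16) \<open>Q \<subseteq> M\<close> by blast
  ultimately show "dom_le (Dist H act sM Q sQ) (Dist (carrier G) act sL P sP)"
    using \<open>Q \<subseteq> P\<close> by (intro dom_le_Dist_of_fnorm_le)
qed

end
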